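(* Let $q$ be a prime power and let $\mathcal{H}_q$ be the Hermitian curve in $\mathrm{PG}(2,q^2)$. Let $\mathcal{B}$ be a $2$-blocking set of $\mathcal{H}_q$. Then in $\mathrm{PG}(2,q^2)$ there exist semiovals of size $k$ for every integer $k$ satisfying $|\mathcal{B}|\leq k\leq q^3+1$.
   Context: $\mathrm{PG}(2,q^2)$ is the Desarguesian projective plane over $\mathbb{F}_{q^2}$. The Hermitian curve $\mathcal{H}_q$ is the set of points of $\mathrm{PG}(2,q^2)$ satisfying $X_2X_0^q+X_2^qX_0+X_1^{q+1}=0$; it has $q^3+1$ points, there is a unique tangent line to $\mathcal{H}_q$ at each of its points, and every other line meets $\mathcal{H}_q$ in exactly $q+1$ points ($(q+1)$-secants). A pointset $\mathcal{D}\subset\mathcal{H}_q$ is a $2$-blocking set of $\mathcal{H}_q$ if every $(q+1)$-secant of $\mathcal{H}_q$ contains at least $2$ points of $\mathcal{D}$. A semioval is a non-empty pointset $\mathcal{S}$ such that for every $P\in\mathcal{S}$ there is a unique line $t_P$ with $\mathcal{S}\cap t_P=\{P\}$. *)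

theory Defs
  imports "HOL-Computational_Algebra.Primes"
begin

type_synonym 'a vec3 = "'a \<times> 'a \<times> 'a"

definition pclass :: "'a::field vec3 \<Rightarrow> 'a vec3 set" where
  "pclass v = (case v of (x, y, z) \<Rightarrow> {(c * x, c * y, c * z) | c. c \<noteq> 0})"

definition pg_points :: "'a::field vec3 set set" where
  "pg_points = {pclass v | v. v \<noteq> (0, 0, 0)}"

definition line_of :: "'a::field vec3 \<Rightarrow> 'a vec3 set set" where
  "line_of u = {P \<in> pg_points. \<forall>(x, y, z) \<in> P. (case u of (a, b, c) \<Rightarrow> a * x + b * y + c * z = 0)}"

definition pg_lines :: "'a::field vec3 set set set" where
  "pg_lines = {line_of u | u. u \<noteq> (0, 0, 0)}"

definition hermitian :: "nat \<Rightarrow> 'a::field vec3 set set" where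
  "hermitian q = {P \<in> pg_points. \<forall>(x0, x1, x2) \<in> P. x2 * x0 ^ q + x2 ^ q * x0 + x1 ^ (q + 1) = 0}"

definition two_blocking_set :: "nat \<Rightarrow> 'a::field vec3 set set \<Rightarrow> bool" where
  "two_blocking_set q D \<longleftrightarrow> D \<subseteq> hermitian q \<and>
     (\<forall>l \<in> pg_lines. card (l \<inter> hermitian q) = q + 1 \<longrightarrow> card (l \<inter> D) \<ge> 2)"

definition semioval :: "'a::field vec3 set set \<Rightarrow> bool" where
  "semioval S \<longleftrightarrow> S \<subseteq> pg_points \<and> S \<noteq> {} \<and>
     (\<forall>P \<in> S. \<exists>!l. l \<in> pg_lines \<and> S \<inter> l = {P})"

definition prime_power :: "nat \<Rightarrow> bool" where
  "prime_power q \<longleftrightarrow> (\<exists>p k. prime p \<and> k \<ge> 1 \<and> q = p ^ k)"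

end

theory Submission
  imports
    Defs
    "HOL-Computational_Algebra.Polynomial"
    "HOL-Algebra.Algebraic_Closure_Type"
    "HOL-Number_Theory.Residues"
begin

text \<open>Every point \<open>P\<close> of the Hermitian curve \<open>\<H>\<close> has a tangent line meeting \<open>\<H>\<close> only in
  \<open>P\<close>, and every other line through \<open>P\<close> meets \<open>\<H>\<close> in \<open>q + 1\<close> points: its points other than
  \<open>P\<close> correspond to the solutions of \<open>x + x\<^sup>q = c\<close> for a suitable \<open>c\<close>, and every fibre of the trace
  map of \<open>GF(q\<^sup>2)\<close> onto \<open>GF(q)\<close> has \<open>q\<close> elements. Hence if \<open>\<B> \<subseteq> \<S> \<subseteq> \<H>\<close>, the tangent at
  \<open>P \<in> \<S>\<close> is the only line meeting \<open>\<S>\<close> exactly in \<open>P\<close>: any other line through \<open>P\<close> is a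
  \<open>(q + 1)\<close>-secant, so it contains two points of \<open>\<B>\<close>. As \<open>|\<H>| \<ge> q\<^sup>3 + 1\<close>, adding points of
  \<open>\<H> - \<B>\<close> to \<open>\<B>\<close> gives semiovals of every size between \<open>|\<B>|\<close> and \<open>q\<^sup>3 + 1\<close>.\<close>

section \<open>Coordinate vectors\<close>

fun dot3 :: "'a::field vec3 \<Rightarrow> 'a vec3 \<Rightarrow> 'a" where
  "dot3 (u0, u1, u2) (x0, x1, x2) = u0 * x0 + u1 * x1 + u2 * x2"

fun scale3 :: "'a::field \<Rightarrow> 'a vec3 \<Rightarrow> 'a vec3" where
  "scale3 c (x0, x1, x2) = (c * x0, c * x1, c * x2)"

fun add3 :: "'a::field vec3 \<Rightarrow> 'a vec3 \<Rightarrow> 'a vec3" where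
  "add3 (x0, x1, x2) (y0, y1, y2) = (x0 + y0, x1 + y1, x2 + y2)"

fun cross3 :: "'a::field vec3 \<Rightarrow> 'a vec3 \<Rightarrow> 'a vec3" where
  "cross3 (a0, a1, a2) (b0, b1, b2) = (a1 * b2 - a2 * b1, a2 * b0 - a0 * b2, a0 * b1 - a1 * b0)"

lemma dot3_commute: "dot3 u v = dot3 v u"
  by (cases u; cases v) (simp add: mult.commute)

lemma dot3_scale3_left: "dot3 (scale3 c u) v = c * dot3 u v"
  by (cases u; cases v) (simp add: algebra_simps)

lemma dot3_scale3_right: "dot3 u (scale3 c v) = c * dot3 u v"
  by (cases u; cases v) (simp add: algebra_simps)

lemma dot3_add3_right: "dot3 u (add3 v w) = dot3 u v + dot3 u w"
  by (cases u; cases v; cases w) (simp add: algebra_simps)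

lemma scale3_eq_0_iff: "scale3 c v = (0, 0, 0) \<longleftrightarrow> c = 0 \<or> v = (0, 0, 0)"
  by (cases v) auto

lemma scale3_scale3: "scale3 c (scale3 d v) = scale3 (c * d) v"
  by (cases v) (simp add: mult.assoc)

lemma scale3_one [simp]: "scale3 1 v = v"
  by (cases v) simp

lemma cross3_eq_0_imp_parallel:
  assumes "a \<noteq> (0, 0, 0)" and "cross3 a b = (0, 0, 0)"
  shows "\<exists>c. b = scale3 c a"
proof -
  obtain a0 a1 a2 b0 b1 b2 where ab: "a = (a0, a1, a2)" "b = (b0, b1, b2)"
    by (cases a; cases b)
  have e: "a1 * b2 = a2 * b1" "a2 * b0 = a0 * b2" "a0 * b1 = a1 * b0"
    using assms(2) by (auto simp: ab)
  consider "a0 \<noteq> 0" | "a1 \<noteq> 0" | "a2 \<noteq> 0"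
    using assms(1) ab by auto
  then show ?thesis
  proof cases
    case 1
    with e show ?thesis by (intro exI[of _ "b0 / a0"]) (auto simp: ab field_simps)
  next
    case 2
    with e show ?thesis by (intro exI[of _ "b1 / a1"]) (auto simp: ab field_simps)
  next
    case 3
    with e show ?thesis by (intro exI[of _ "b2 / a2"]) (auto simp: ab field_simps)
  qed
qed

lemma cross3_scale3_scale3: "cross3 (scale3 c v) (scale3 d v) = (0, 0, 0)"
  by (cases v) (simp add: algebra_simps)

lemma cross3_cross3:
  "cross3 (cross3 a b) w = add3 (scale3 (dot3 a w) b) (scale3 (- dot3 b w) a)"
  by (cases a; cases b; cases w) (simp add: algebra_simps)

text \<open>Cramer's rule; \<open>dot3 (cross3 a b) c\<close> is the determinant of \<open>a, b, c\<close>.\<close>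

lemma cramer3:
  "scale3 (dot3 (cross3 a b) c) w =
     add3 (add3 (scale3 (dot3 (cross3 w b) c) a) (scale3 (dot3 (cross3 a w) c) b))
          (scale3 (dot3 (cross3 a b) w) c)"
  by (cases a; cases b; cases c; cases w) (simp add: ring_distribs mult.assoc mult.left_commute)

lemma exists_dot3_nonzero:
  assumes "n \<noteq> (0, 0, 0)"
  shows "\<exists>c. dot3 n c \<noteq> 0"
proof -
  have "\<exists>c\<in>{(1, 0, 0), (0, 1, 0), (0, 0, 1)}. dot3 n c \<noteq> 0"
    using assms by (cases n) auto
  then show ?thesis by blast
qed

lemma orthogonal_imp_parallel_cross3:
  assumes "cross3 a b \<noteq> (0, 0, 0)" and "dot3 a w = 0" and "dot3 b w = 0"
  shows "\<exists>c. w = scale3 c (cross3 a b)"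
proof -
  have "cross3 (cross3 a b) w = (0, 0, 0)"
    using assms(2,3) cross3_cross3[of a b w] by (cases a; cases b) simp
  with assms(1) show ?thesis by (rule cross3_eq_0_imp_parallel)
qed

lemma orthogonal_cross3_imp_span:
  assumes "cross3 a b \<noteq> (0, 0, 0)" and "dot3 (cross3 a b) w = 0"
  shows "\<exists>x y. w = add3 (scale3 x a) (scale3 y b)"
proof -
  obtain c where c: "dot3 (cross3 a b) c \<noteq> 0"
    using exists_dot3_nonzero[OF assms(1)] by blast
  define d where "d = dot3 (cross3 a b) c"
  define x where "x = dot3 (cross3 w b) c"
  define y where "y = dot3 (cross3 a w) c"
  have "scale3 d w = add3 (scale3 x a) (scale3 y b)"
    using cramer3[of a b c w] assms(2) unfolding d_def x_def y_def
    by (cases a; cases b; cases c) simp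
  moreover have "w = scale3 (1 / d) (scale3 d w)"
    using c by (simp add: scale3_scale3 d_def)
  ultimately have "w = scale3 (1 / d) (add3 (scale3 x a) (scale3 y b))"
    by simp
  also have "\<dots> = add3 (scale3 (x / d) a) (scale3 (y / d) b)"
    by (cases a; cases b) (simp add: algebra_simps)
  finally show ?thesis by blast
qed

lemma cross3_nonzero_imp_independent:
  assumes "cross3 a b \<noteq> (0, 0, 0)" and "add3 (scale3 x a) (scale3 y b) = (0, 0, 0)"
  shows "x = 0 \<and> y = 0"
proof -
  have "scale3 y (cross3 a b) = cross3 a (add3 (scale3 x a) (scale3 y b))"
    by (cases a; cases b) (simp add: algebra_simps)
  also have "\<dots> = (0, 0, 0)"
    using assms(2) by (cases a) simp
  finally have "y = 0"
    using assms(1) by (simp add: scale3_eq_0_iff)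
  have "scale3 x (cross3 a b) = cross3 (add3 (scale3 x a) (scale3 y b)) b"
    by (cases a; cases b) (simp add: algebra_simps)
  also have "\<dots> = (0, 0, 0)"
    using assms(2) by (cases b) simp
  finally have "x = 0"
    using assms(1) by (simp add: scale3_eq_0_iff)
  with \<open>y = 0\<close> show ?thesis by simp
qed

lemma exists_independent_orthogonal:
  assumes "a \<noteq> (0, 0, 0)" and "u \<noteq> (0, 0, 0)" and "dot3 u a = 0"
  shows "\<exists>b. dot3 u b = 0 \<and> cross3 a b \<noteq> (0, 0, 0)"
proof -
  obtain c where c: "dot3 a c \<noteq> 0"
    using exists_dot3_nonzero[OF assms(1)] by blast
  have "dot3 u (cross3 u c) = 0"
    by (cases u; cases c) (simp add: algebra_simps)
  moreover have "cross3 a (cross3 u c) = add3 (scale3 (dot3 a c) u) (scale3 (- dot3 a u) c)"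
    by (cases a; cases u; cases c) (simp add: algebra_simps)
  then have "cross3 a (cross3 u c) = scale3 (dot3 a c) u"
    using assms(3) by (cases u; cases c) (simp add: dot3_commute)
  ultimately show ?thesis
    using assms(2) c by (metis scale3_eq_0_iff)
qed

section \<open>Points and lines of the projective plane\<close>

lemma mem_pclass_iff: "w \<in> pclass v \<longleftrightarrow> (\<exists>c. c \<noteq> 0 \<and> w = scale3 c v)"
  by (cases v) (auto simp: pclass_def)

lemma pclass_self: "v \<in> pclass v"
  by (cases v) (auto simp: mem_pclass_iff intro: exI[of _ 1])

lemma pclass_eq_iff: "pclass v = pclass w \<longleftrightarrow> (\<exists>c. c \<noteq> 0 \<and> w = scale3 c v)"
proof
  assume "pclass v = pclass w"
  then show "\<exists>c. c \<noteq> 0 \<and> w = scale3 c v"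
    using pclass_self[of w] mem_pclass_iff by blast
next
  assume "\<exists>c. c \<noteq> 0 \<and> w = scale3 c v"
  then obtain c where c: "c \<noteq> 0" "w = scale3 c v" by blast
  have "x \<in> pclass v \<longleftrightarrow> x \<in> pclass w" for x
  proof
    assume "x \<in> pclass v"
    then obtain d where "d \<noteq> 0" "x = scale3 d v" by (auto simp: mem_pclass_iff)
    with c have "d / c \<noteq> 0" "x = scale3 (d / c) w" by (simp_all add: scale3_scale3)
    then show "x \<in> pclass w" unfolding mem_pclass_iff by blast
  next
    assume "x \<in> pclass w"
    then obtain d where "d \<noteq> 0" "x = scale3 d w" by (auto simp: mem_pclass_iff)
    with c have "d * c \<noteq> 0" "x = scale3 (d * c) v" by (simp_all add: scale3_scale3)
    then show "x \<in> pclass v" unfolding mem_pclass_iff by blast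
  qed
  then show "pclass v = pclass w" by blast
qed

lemma pclass_in_pg_points: "v \<noteq> (0, 0, 0) \<Longrightarrow> pclass v \<in> pg_points"
  unfolding pg_points_def by blast

lemma pg_pointsE:
  assumes "P \<in> pg_points"
  obtains v where "v \<noteq> (0, 0, 0)" "P = pclass v"
  using assms by (auto simp: pg_points_def)

lemma ball_pclass_iff:
  assumes "\<And>c w. c \<noteq> 0 \<Longrightarrow> Z (scale3 c w) \<longleftrightarrow> Z w"
  shows "(\<forall>w\<in>pclass v. Z w) \<longleftrightarrow> Z v"
  by (metis assms mem_pclass_iff pclass_self)

lemma pclass_in_line_of_iff:
  assumes "v \<noteq> (0, 0, 0)"
  shows "pclass v \<in> line_of u \<longleftrightarrow> dot3 u v = 0"
proof -
  have "pclass v \<in> line_of u \<longleftrightarrow> (\<forall>w\<in>pclass v. dot3 u w = 0)"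
    using pclass_in_pg_points[OF assms] by (cases u) (auto simp: line_of_def)
  also have "\<dots> \<longleftrightarrow> dot3 u v = 0"
    by (rule ball_pclass_iff) (simp add: dot3_scale3_right)
  finally show ?thesis .
qed

lemma line_ofE:
  assumes "P \<in> line_of u"
  obtains v where "v \<noteq> (0, 0, 0)" "P = pclass v" "dot3 u v = 0"
proof -
  from assms have "P \<in> pg_points"
    by (simp add: line_of_def)
  then obtain v where "v \<noteq> (0, 0, 0)" "P = pclass v"
    by (rule pg_pointsE)
  with assms that show thesis
    using pclass_in_line_of_iff by blast
qed

lemma line_of_in_pg_lines: "u \<noteq> (0, 0, 0) \<Longrightarrow> line_of u \<in> pg_lines"
  unfolding pg_lines_def by blast

lemma pg_linesE:
  assumes "l \<in> pg_lines"
  obtains u where "u \<noteq> (0, 0, 0)" "l = line_of u"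
  using assms unfolding pg_lines_def mem_Collect_eq by (elim exE conjE) (rule that)

lemma line_of_scale3:
  assumes "c \<noteq> 0"
  shows "line_of (scale3 c u) = line_of u"
proof -
  have "P \<in> line_of (scale3 c u) \<longleftrightarrow> P \<in> line_of u" for P
  proof
    assume "P \<in> line_of (scale3 c u)"
    then obtain v where "v \<noteq> (0, 0, 0)" "P = pclass v" "dot3 (scale3 c u) v = 0"
      by (rule line_ofE)
    with assms show "P \<in> line_of u"
      by (simp add: pclass_in_line_of_iff dot3_scale3_left)
  next
    assume "P \<in> line_of u"
    then obtain v where "v \<noteq> (0, 0, 0)" "P = pclass v" "dot3 u v = 0"
      by (rule line_ofE)
    then show "P \<in> line_of (scale3 c u)"
      by (simp add: pclass_in_line_of_iff dot3_scale3_left)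
  qed
  then show ?thesis by blast
qed

lemma affine_point_nonzero:
  assumes "cross3 a b \<noteq> (0, 0, 0)"
  shows "add3 (scale3 l a) b \<noteq> (0, 0, 0)"
  using cross3_nonzero_imp_independent[OF assms, of l 1] by (cases b) auto

lemma inj_pclass_affine:
  assumes "cross3 a b \<noteq> (0, 0, 0)"
  shows "inj (\<lambda>l. pclass (add3 (scale3 l a) b))"
proof
  fix l m
  assume "pclass (add3 (scale3 l a) b) = pclass (add3 (scale3 m a) b)"
  then obtain d where "add3 (scale3 m a) b = scale3 d (add3 (scale3 l a) b)"
    by (auto simp: pclass_eq_iff)
  then have "add3 (scale3 (m - d * l) a) (scale3 (1 - d) b) = (0, 0, 0)"
    by (cases a; cases b) (auto simp: algebra_simps)
  with cross3_nonzero_imp_independent[OF assms] show "l = m" by fastforce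
qed

lemma pclass_affine_neq:
  assumes "cross3 a b \<noteq> (0, 0, 0)"
  shows "pclass (add3 (scale3 l a) b) \<noteq> pclass a"
proof
  assume "pclass (add3 (scale3 l a) b) = pclass a"
  then obtain d where "a = scale3 d (add3 (scale3 l a) b)"
    by (auto simp: pclass_eq_iff)
  then have "add3 (scale3 (d * l - 1) a) (scale3 d b) = (0, 0, 0)"
    by (cases a; cases b) (auto simp: algebra_simps)
  with cross3_nonzero_imp_independent[OF assms] show False by fastforce
qed

lemma line_of_eq_insert_affine:
  assumes "cross3 a b \<noteq> (0, 0, 0)" and "u \<noteq> (0, 0, 0)" and "dot3 u a = 0" and "dot3 u b = 0"
  shows "line_of u = insert (pclass a) (range (\<lambda>l. pclass (add3 (scale3 l a) b)))"
proof (intro equalityI subsetI)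
  fix P
  assume "P \<in> line_of u"
  then obtain w where w: "w \<noteq> (0, 0, 0)" "P = pclass w" "dot3 u w = 0"
    by (rule line_ofE)
  have "dot3 a u = 0" "dot3 b u = 0"
    using assms(3,4) by (simp_all add: dot3_commute)
  then obtain c where "u = scale3 c (cross3 a b)"
    using orthogonal_imp_parallel_cross3[OF assms(1)] by blast
  with assms(2) w(3) have "dot3 (cross3 a b) w = 0"
    by (auto simp: dot3_scale3_left scale3_eq_0_iff)
  then obtain x y where xy: "w = add3 (scale3 x a) (scale3 y b)"
    using orthogonal_cross3_imp_span[OF assms(1)] by blast
  show "P \<in> insert (pclass a) (range (\<lambda>l. pclass (add3 (scale3 l a) b)))"
  proof (cases "y = 0")
    case True
    with xy have "w = scale3 x a"
      by (cases a; cases b) simp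
    with w(1) have "x \<noteq> 0"
      by (simp add: scale3_eq_0_iff)
    with \<open>w = scale3 x a\<close> w(2) show ?thesis
      using pclass_eq_iff by blast
  next
    case False
    with xy have "w = scale3 y (add3 (scale3 (x / y) a) b)"
      by (cases a; cases b) (simp add: algebra_simps)
    with w(2) False have "P = pclass (add3 (scale3 (x / y) a) b)"
      using pclass_eq_iff by blast
    then show ?thesis by blast
  qed
next
  fix P
  assume "P \<in> insert (pclass a) (range (\<lambda>l. pclass (add3 (scale3 l a) b)))"
  then consider "P = pclass a" | l where "P = pclass (add3 (scale3 l a) b)"
    by blast
  then show "P \<in> line_of u"
  proof cases
    case 1
    have "cross3 (0, 0, 0) b = (0, 0, 0)"
      by (cases b) simp
    with assms(1) have "a \<noteq> (0, 0, 0)"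
      by auto
    with 1 assms(3) show ?thesis
      by (simp add: pclass_in_line_of_iff)
  next
    case 2
    with assms(3,4) show ?thesis
      by (simp add: pclass_in_line_of_iff[OF affine_point_nonzero[OF assms(1)]]
          dot3_add3_right dot3_scale3_right)
  qed
qed

section \<open>The Hermitian form\<close>

fun herm_form :: "nat \<Rightarrow> 'a::field vec3 \<Rightarrow> 'a" where
  "herm_form q (x0, x1, x2) = x2 * x0 ^ q + x2 ^ q * x0 + x1 ^ (q + 1)"

text \<open>The tangent line to the Hermitian curve at \<open>pclass a\<close> is \<open>line_of (herm_polar q a)\<close>.\<close>

fun herm_polar :: "nat \<Rightarrow> 'a::field vec3 \<Rightarrow> 'a vec3" where
  "herm_polar q (a0, a1, a2) = (a2 ^ q, a1 ^ q, a0 ^ q)"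

lemma herm_form_scale3: "herm_form q (scale3 c v) = c ^ (q + 1) * herm_form q v"
  by (cases v) (simp add: power_mult_distrib algebra_simps)

lemma dot3_herm_polar_self: "dot3 (herm_polar q a) a = herm_form q a"
  by (cases a) (simp add: algebra_simps power_add)

lemma pclass_in_hermitian_iff:
  assumes "v \<noteq> (0, 0, 0)"
  shows "pclass v \<in> hermitian q \<longleftrightarrow> herm_form q v = 0"
proof -
  have "pclass v \<in> hermitian q \<longleftrightarrow> (\<forall>w\<in>pclass v. herm_form q w = 0)"
    using pclass_in_pg_points[OF assms] by (auto simp: hermitian_def split: prod.splits)
  also have "\<dots> \<longleftrightarrow> herm_form q v = 0"
    by (rule ball_pclass_iff) (simp add: herm_form_scale3)
  finally show ?thesis .
qed

lemma hermitian_subset_pg_points: "hermitian q \<subseteq> pg_points"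
  by (auto simp: hermitian_def)

lemma hermitianE:
  assumes "P \<in> hermitian q"
  obtains v where "v \<noteq> (0, 0, 0)" "P = pclass v" "herm_form q v = 0"
proof -
  from assms have "P \<in> pg_points"
    using hermitian_subset_pg_points by blast
  then obtain v where "v \<noteq> (0, 0, 0)" "P = pclass v"
    by (rule pg_pointsE)
  with assms that show thesis
    using pclass_in_hermitian_iff by blast
qed

section \<open>Fields of order \<open>q\<^sup>2\<close>\<close>

text \<open>The library lemma \<open>finite_field_power_card_eq_same\<close> needs the type class \<open>finite_field\<close>;
  for a type of sort \<open>{finite, field}\<close> it is obtained from the unit group of the type's ring in
  the sense of HOL-Algebra.\<close>

lemma finite_field_power_card_eq_self:
  fixes x :: "'a::{finite, field}"
  shows "x ^ card (UNIV :: 'a set) = x"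
proof -
  define n where "n = card (UNIV :: 'a set) - 1"
  have n: "card (UNIV :: 'a set) = Suc n"
    using finite_UNIV_card_ge_0[where ?'a = 'a] by (simp add: n_def)
  show ?thesis
  proof (cases "x = 0")
    case False
    let ?R = "ring_of_type_algebra :: 'a ring"
    have units: "Units ?R = UNIV - {0}"
      using field.field_Units[OF field_from_type_algebra] by (simp add: ring_of_type_algebra_def)
    have pow: "x [^]\<^bsub>?R\<^esub> m = x ^ m" for m :: nat
      by (induction m) (simp_all add: ring_of_type_algebra_def)
    have "x [^]\<^bsub>?R\<^esub> card (Units ?R) = \<one>\<^bsub>?R\<^esub>"
      by (rule cring.units_power_order_eq_one) (use False units in auto)
    then have "x ^ n = 1"
      unfolding pow units by (simp add: card_Diff_singleton n ring_of_type_algebra_def)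
    then show ?thesis
      by (simp add: n)
  qed (simp add: n)
qed

lemma card_fibre_eq_if_tight:
  assumes "finite A" and "finite K" and "f ` A \<subseteq> K" and "card K \<le> n"
    and "\<And>y. y \<in> K \<Longrightarrow> card {x \<in> A. f x = y} \<le> m" and "card A = n * m" and "y \<in> K"
  shows "card {x \<in> A. f x = y} = m"
proof -
  have "{y' \<in> K. f x = y'} = {f x}" if "x \<in> A" for x
    using assms(3) that by auto
  then have "(\<Sum>y'\<in>K. card {x \<in> A. f x = y'}) = card A"
    using sum_multicount[OF assms(2,1), of "\<lambda>y' x. f x = y'" 1] by simp
  also have "\<dots> \<ge> (\<Sum>y'\<in>K. m)"
    using assms(4,6) by simp
  finally have "(\<Sum>y'\<in>K. card {x \<in> A. f x = y'}) = (\<Sum>y'\<in>K. m)"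
    using sum_mono[of K "\<lambda>y'. card {x \<in> A. f x = y'}" "\<lambda>_. m"] assms(5) by simp
  then show ?thesis
    using sum_mono_inv[OF _ assms(5) assms(7) assms(2)] by simp
qed

locale frobenius_field =
  fixes q :: nat and field_type :: "'a::{finite, field} itself"
  assumes card_UNIV: "card (UNIV :: 'a set) = q ^ 2"
    and frobenius_add: "\<And>x y :: 'a. (x + y) ^ q = x ^ q + y ^ q"
begin

lemma q_ge_2: "q \<ge> 2"
proof (rule ccontr)
  assume "\<not> q \<ge> 2"
  then have "q = 0 \<or> q = 1"
    by linarith
  then have "q ^ 2 \<le> 1"
    by auto
  moreover have "card {0, 1 :: 'a} \<le> card (UNIV :: 'a set)"
    by (rule card_mono) auto
  ultimately show False
    using card_UNIV by simp
qed

lemma frobenius_frobenius: "(x ^ q) ^ q = (x :: 'a)"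
  using finite_field_power_card_eq_self[of x] card_UNIV
  by (simp add: power_mult power2_eq_square)

lemma frobenius_neg: "(- x :: 'a) ^ q = - (x ^ q)"
proof -
  have "x ^ q + (- x) ^ q = 0"
    using frobenius_add[of x "- x"] q_ge_2 by (simp add: power_0_left)
  then show ?thesis
    by (simp add: eq_neg_iff_add_eq_0 add.commute)
qed

lemma frobenius_inj: "(x :: 'a) ^ q = y ^ q \<longleftrightarrow> x = y"
  by (metis frobenius_frobenius)

lemma card_frobenius_affine_roots_le: "card {x :: 'a. x ^ q + d * x = c} \<le> q"
proof -
  let ?p = "monom 1 q + [:- c, d:]"
  have deg: "degree ?p = q"
    using q_ge_2 by (subst degree_add_eq_left) (auto simp: degree_monom_eq)
  then have "?p \<noteq> 0"
    using q_ge_2 by auto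
  then have "card {x. poly ?p x = 0} \<le> q"
    using card_poly_roots_bound deg by metis
  moreover have "{x. poly ?p x = 0} = {x. x ^ q + d * x = c}"
    by (auto simp: poly_monom algebra_simps)
  ultimately show ?thesis by simp
qed

text \<open>All fibres of the trace \<open>x \<mapsto> x + x\<^sup>q\<close> onto the subfield of order \<open>q\<close> have \<open>q\<close>
  elements: there are at most \<open>q\<close> fibres of at most \<open>q\<close> elements each, covering \<open>q\<^sup>2\<close> elements.\<close>

lemma card_trace_fibre:
  assumes "c ^ q = c"
  shows "card {x :: 'a. x + x ^ q = c} = q"
proof -
  have "card {x \<in> UNIV. x + x ^ q = c} = q"
  proof (rule card_fibre_eq_if_tight[where K = "{y. y ^ q = y}" and n = q])
    show "(\<lambda>x. x + x ^ q) ` UNIV \<subseteq> {y :: 'a. y ^ q = y}"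
      by (auto simp: frobenius_add frobenius_frobenius)
    show "card {y :: 'a. y ^ q = y} \<le> q"
      using card_frobenius_affine_roots_le[of "- 1" 0] by simp
    show "card {x \<in> UNIV. x + x ^ q = y} \<le> q" for y :: 'a
      using card_frobenius_affine_roots_le[of 1 y] by (simp add: add.commute)
    show "card (UNIV :: 'a set) = q * q"
      using card_UNIV by (simp add: power2_eq_square)
  qed (use assms in auto)
  then show ?thesis by simp
qed

end

text \<open>\<open>prime\<close> is qualified below since HOL-Algebra's \<open>Divisibility.prime\<close> shadows it.\<close>

lemma frobenius_field_if_prime_power:
  assumes "prime_power q" and "card (UNIV :: 'a::{finite, field} set) = q ^ 2"
  shows "frobenius_field TYPE('a) q"
proof
  obtain p k where pk: "Factorial_Ring.prime p" "q = p ^ k"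
    using assms(1) by (auto simp: prime_power_def)
  have prime_char: "Factorial_Ring.prime CHAR('a)"
    by (rule prime_CHAR_semidom) (simp add: finite_imp_CHAR_pos)
  have "CHAR('a) dvd p ^ (2 * k)"
    using CHAR_dvd_CARD[where ?'a = 'a] assms(2) pk(2) by (simp add: power_mult mult.commute)
  then have "CHAR('a) dvd p"
    by (rule prime_dvd_power[OF prime_char])
  then have "CHAR('a) = p"
    using prime_char pk(1) by (intro primes_dvd_imp_eq)
  then show "(x + y) ^ q = x ^ q + y ^ q" for x y :: 'a
    using prime_char pk(2) by (intro freshmans_dream') simp_all
qed (fact assms(2))

section \<open>Tangents and secants of the Hermitian curve\<close>

context frobenius_field
begin

lemma dot3_herm_polar_swap: "dot3 (herm_polar q b) (a :: 'a vec3) = dot3 (herm_polar q a) b ^ q"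
  by (cases a; cases b) (simp add: frobenius_add power_mult_distrib frobenius_frobenius algebra_simps)

lemma herm_polar_eq_0_iff: "herm_polar q (a :: 'a vec3) = (0, 0, 0) \<longleftrightarrow> a = (0, 0, 0)"
  using q_ge_2 by (cases a) auto

lemma herm_polar_scale3: "herm_polar q (scale3 c a) = scale3 (c ^ q) (herm_polar q (a :: 'a vec3))"
  by (cases a) (simp add: power_mult_distrib)

lemma herm_polar_inj: "herm_polar q a = herm_polar q b \<Longrightarrow> a = (b :: 'a vec3)"
  by (cases a; cases b) (simp add: frobenius_inj)

lemma herm_form_power_q: "herm_form q b ^ q = herm_form q (b :: 'a vec3)"
  by (cases b) (simp add: frobenius_add power_mult_distrib frobenius_frobenius algebra_simps power_add)

lemma herm_form_affine:
  fixes a b :: "'a vec3"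
  assumes "herm_form q a = 0"
  defines "s \<equiv> dot3 (herm_polar q a) b ^ q"
  shows "herm_form q (add3 (scale3 l a) b) = l * s + (l * s) ^ q + herm_form q b"
proof -
  have "herm_form q (add3 (scale3 l a) b) = l ^ (q + 1) * herm_form q a
      + l * dot3 (herm_polar q a) b ^ q + l ^ q * dot3 (herm_polar q a) b + herm_form q b"
    by (cases a; cases b) (simp add: frobenius_add power_mult_distrib frobenius_frobenius algebra_simps power_add)
  with assms show ?thesis
    by (simp add: power_mult_distrib frobenius_frobenius mult.commute)
qed

text \<open>If \<open>a\<close> and \<open>b\<close> were independent, both polars would be multiples of \<open>a \<times> b\<close>, and then
  \<open>b\<close> would be a multiple of \<open>a\<close> because the polar map is injective and semilinear.\<close>

lemma herm_polar_orthogonal_imp_same_point: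
  assumes "a \<noteq> (0, 0, 0)" and "b \<noteq> (0, 0, 0)" and "herm_form q a = 0" and "herm_form q b = 0"
    and "dot3 (herm_polar q a) b = 0"
  shows "pclass b = pclass (a :: 'a vec3)"
proof (cases "cross3 a b = (0, 0, 0)")
  case True
  then obtain c where c: "b = scale3 c a"
    using cross3_eq_0_imp_parallel assms(1) by blast
  with assms(2) have "c \<noteq> 0"
    by (simp add: scale3_eq_0_iff)
  with c show ?thesis
    using pclass_eq_iff by blast
next
  case False
  have "dot3 a (herm_polar q a) = 0" "dot3 b (herm_polar q a) = 0"
    using assms(3,5) by (simp_all add: dot3_commute[of a] dot3_commute[of b] dot3_herm_polar_self)
  then obtain c1 where c1: "herm_polar q a = scale3 c1 (cross3 a b)"
    using orthogonal_imp_parallel_cross3[OF False] by blast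
  have "dot3 a (herm_polar q b) = 0"
    using assms(5) q_ge_2 by (simp add: dot3_commute[of a] dot3_herm_polar_swap[of b a])
  moreover have "dot3 b (herm_polar q b) = 0"
    using assms(4) by (simp add: dot3_commute[of b] dot3_herm_polar_self)
  ultimately obtain c2 where c2: "herm_polar q b = scale3 c2 (cross3 a b)"
    using orthogonal_imp_parallel_cross3[OF False] by blast
  have "c1 \<noteq> 0"
    using c1 assms(1) herm_polar_eq_0_iff scale3_eq_0_iff by metis
  with c1 c2 have "herm_polar q b = herm_polar q (scale3 ((c2 / c1) ^ q) a)"
    by (simp add: herm_polar_scale3 frobenius_frobenius scale3_scale3)
  then have "b = scale3 ((c2 / c1) ^ q) a"
    by (rule herm_polar_inj)
  then have "cross3 a b = (0, 0, 0)"
    using cross3_scale3_scale3[of 1 a] by simp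
  with False show ?thesis by simp
qed

lemma card_secant_inter_hermitian:
  assumes a: "a \<noteq> (0, 0, 0)" "herm_form q a = 0" and u: "u \<noteq> (0, 0, 0)" "dot3 u a = 0"
    and not_tangent: "line_of u \<noteq> line_of (herm_polar q a)"
  shows "card (line_of u \<inter> (hermitian q :: 'a vec3 set set)) = q + 1"
proof -
  obtain b where ub: "dot3 u b = 0" and ab: "cross3 a b \<noteq> (0, 0, 0)"
    using exists_independent_orthogonal a(1) u by blast
  obtain c where c: "u = scale3 c (cross3 a b)"
    using orthogonal_imp_parallel_cross3[OF ab] u(2) ub by (metis dot3_commute)
  have "c \<noteq> 0"
    using c u(1) by (metis scale3_eq_0_iff)
  define s where "s = dot3 (herm_polar q a) b ^ q"
  have "s \<noteq> 0"
  proof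
    assume "s = 0"
    then have "dot3 a (herm_polar q a) = 0" "dot3 b (herm_polar q a) = 0"
      using a(2) by (simp_all add: s_def dot3_commute[of a] dot3_commute[of b] dot3_herm_polar_self)
    then obtain d where d: "herm_polar q a = scale3 d (cross3 a b)"
      using orthogonal_imp_parallel_cross3[OF ab] by blast
    with c \<open>c \<noteq> 0\<close> have "herm_polar q a = scale3 (d / c) u"
      by (simp add: scale3_scale3)
    moreover have "d \<noteq> 0"
      using d a(1) by (metis herm_polar_eq_0_iff scale3_eq_0_iff)
    ultimately show False
      using not_tangent \<open>c \<noteq> 0\<close> by (simp add: line_of_scale3)
  qed
  define f where "f l = pclass (add3 (scale3 l a) b)" for l
  define L where "L = {l. herm_form q (add3 (scale3 l a) b) = 0}"
  have "line_of u \<inter> hermitian q = insert (pclass a) (f ` L)"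
    using line_of_eq_insert_affine[OF ab u(1,2) ub] pclass_in_hermitian_iff[OF a(1)] a(2)
      pclass_in_hermitian_iff[OF affine_point_nonzero[OF ab]]
    by (auto simp: f_def L_def)
  moreover have "inj_on f L" "pclass a \<notin> f ` L"
    using inj_pclass_affine[OF ab] pclass_affine_neq[OF ab] by (auto simp: f_def inj_on_def)
  moreover have "card L = q"
  proof -
    have L_eq: "L = (\<lambda>l. l * s) -` {y. y + y ^ q = - herm_form q b}"
      using herm_form_affine[OF a(2)] by (auto simp: L_def s_def eq_neg_iff_add_eq_0 add.assoc)
    have "inj (\<lambda>l. l * s)" "surj (\<lambda>l. l * s)"
      using \<open>s \<noteq> 0\<close> by (auto intro!: injI surjI[of _ "\<lambda>y. y / s"])
    then have "card L = card {y. y + y ^ q = - herm_form q b}"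
      unfolding L_eq by (intro card_vimage_inj) auto
    also have "\<dots> = q"
      by (rule card_trace_fibre) (simp add: frobenius_neg herm_form_power_q)
    finally show ?thesis .
  qed
  ultimately show ?thesis
    by (simp add: card_image)
qed

lemma hermitian_tangent_line:
  fixes P :: "'a vec3 set"
  assumes "P \<in> hermitian q"
  obtains t where "t \<in> pg_lines" and "t \<inter> hermitian q = {P}"
    and "\<And>l. l \<in> pg_lines \<Longrightarrow> P \<in> l \<Longrightarrow> l \<noteq> t \<Longrightarrow> card (l \<inter> hermitian q) = q + 1"
proof -
  obtain a where a: "a \<noteq> (0, 0, 0)" "P = pclass a" "herm_form q a = 0"
    using assms by (rule hermitianE)
  let ?t = "line_of (herm_polar q a)"
  have "?t \<in> pg_lines"
    using a(1) by (simp add: line_of_in_pg_lines herm_polar_eq_0_iff)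
  moreover have "?t \<inter> hermitian q = {P}"
  proof (intro equalityI subsetI)
    fix Q
    assume Q: "Q \<in> ?t \<inter> hermitian q"
    then obtain b where b: "b \<noteq> (0, 0, 0)" "Q = pclass b" "herm_form q b = 0"
      by (blast elim: hermitianE)
    with Q have "dot3 (herm_polar q a) b = 0"
      by (simp add: pclass_in_line_of_iff)
    with a b show "Q \<in> {P}"
      using herm_polar_orthogonal_imp_same_point by simp
  qed (use assms a in \<open>simp add: pclass_in_line_of_iff dot3_herm_polar_self\<close>)
  moreover have "card (l \<inter> hermitian q) = q + 1"
    if l: "l \<in> pg_lines" "P \<in> l" "l \<noteq> ?t" for l
  proof -
    obtain u where u: "u \<noteq> (0, 0, 0)" "l = line_of u"
      using l(1) by (rule pg_linesE)
    with l(2) a have "dot3 u a = 0"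
      by (simp add: pclass_in_line_of_iff)
    with a u l(3) show ?thesis
      by (simp add: card_secant_inter_hermitian)
  qed
  ultimately show thesis
    by (rule that)
qed

lemma exists_secant_of_hermitian: "\<exists>l \<in> pg_lines. card (l \<inter> (hermitian q :: 'a vec3 set set)) = q + 1"
proof -
  let ?P = "pclass (0, 0, 1 :: 'a)"
  have "?P \<in> hermitian q"
    using q_ge_2 by (simp add: pclass_in_hermitian_iff)
  then obtain t where "t \<in> pg_lines" "t \<inter> hermitian q = {?P}"
    and secant: "\<And>l. l \<in> pg_lines \<Longrightarrow> ?P \<in> l \<Longrightarrow> l \<noteq> t \<Longrightarrow> card (l \<inter> hermitian q) = q + 1"
    by (rule hermitian_tangent_line) blast
  \<comment> \<open>the lines \<open>X\<^sub>0 = 0\<close> and \<open>X\<^sub>1 = 0\<close> both pass through \<open>?P\<close>, so one of them differs from \<open>t\<close>\<close>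
  let ?l0 = "line_of (1, 0, 0 :: 'a)" and ?l1 = "line_of (0, 1, 0 :: 'a)"
  have "pclass (1, 0, 0) \<in> ?l1 - ?l0"
    by (simp add: pclass_in_line_of_iff)
  then have "?l0 \<noteq> t \<or> ?l1 \<noteq> t" by blast
  moreover have "?l0 \<in> pg_lines" "?l1 \<in> pg_lines" "?P \<in> ?l0" "?P \<in> ?l1"
    by (simp_all add: line_of_in_pg_lines pclass_in_line_of_iff)
  ultimately show ?thesis
    using secant by blast
qed

lemma card_hermitian_ge: "card (hermitian q :: 'a vec3 set set) \<ge> q ^ 3 + 1"
proof -
  define A where "A = (SIGMA x:(UNIV :: 'a set). {y. y + y ^ q = - (x ^ (q + 1))})"
  define g where "g = (\<lambda>(x, y). pclass (1 :: 'a, x, y))"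
  have "card {y :: 'a. y + y ^ q = - (x ^ (q + 1))} = q" for x :: 'a
  proof (rule card_trace_fibre)
    have "(x ^ (q + 1)) ^ q = x ^ (q + 1)"
      by (simp add: power_add power_mult_distrib frobenius_frobenius mult.commute)
    then show "(- (x ^ (q + 1))) ^ q = - (x ^ (q + 1))"
      by (simp add: frobenius_neg)
  qed
  then have "card A = q ^ 3"
    unfolding A_def using card_UNIV by (simp add: power2_eq_square power3_eq_cube)
  moreover have "inj_on g A"
    by (auto simp: inj_on_def g_def pclass_eq_iff)
  moreover have "pclass (0 :: 'a, 0, 1) \<notin> g ` A"
    by (auto simp: g_def pclass_eq_iff)
  ultimately have "q ^ 3 + 1 = card (insert (pclass (0 :: 'a, 0, 1)) (g ` A))"
    by (simp add: card_image)
  also have "\<dots> \<le> card (hermitian q :: 'a vec3 set set)"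
    using q_ge_2
    by (intro card_mono) (auto simp: A_def g_def pclass_in_hermitian_iff add_eq_0_iff2 add.commute)
  finally show ?thesis .
qed

section \<open>Semiovals\<close>

lemma semioval_if_contains_2_blocking_set:
  assumes "two_blocking_set q B" and "B \<subseteq> S" and "S \<subseteq> (hermitian q :: 'a vec3 set set)"
  shows "semioval S"
  unfolding semioval_def
proof (intro conjI ballI)
  show "S \<subseteq> pg_points"
    using assms(3) hermitian_subset_pg_points by blast
  obtain l where "l \<in> pg_lines" "card (l \<inter> (hermitian q :: 'a vec3 set set)) = q + 1"
    using exists_secant_of_hermitian by blast
  with assms(1) have "card (l \<inter> B) \<ge> 2"
    unfolding two_blocking_set_def by blast
  then have "l \<inter> B \<noteq> {}"
    by (cases "l \<inter> B = {}") simp_all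
  with assms(2) show "S \<noteq> {}"
    by blast
  fix P
  assume "P \<in> S"
  with assms(3) have "P \<in> hermitian q"
    by blast
  then obtain t where t: "t \<in> pg_lines" "t \<inter> hermitian q = {P}"
    and secant: "\<And>l. l \<in> pg_lines \<Longrightarrow> P \<in> l \<Longrightarrow> l \<noteq> t \<Longrightarrow> card (l \<inter> hermitian q) = q + 1"
    by (rule hermitian_tangent_line) blast
  show "\<exists>!l. l \<in> pg_lines \<and> S \<inter> l = {P}"
  proof (rule ex1I[of _ t])
    show "t \<in> pg_lines \<and> S \<inter> t = {P}"
      using t \<open>P \<in> S\<close> assms(3) by blast
  next
    fix l
    assume l: "l \<in> pg_lines \<and> S \<inter> l = {P}"
    show "l = t"
    proof (rule ccontr)
      assume "l \<noteq> t"
      moreover have "P \<in> l"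
        using l by blast
      ultimately have "card (l \<inter> hermitian q) = q + 1"
        using l secant by blast
      with l assms(1) have "card (l \<inter> B) \<ge> 2"
        unfolding two_blocking_set_def by blast
      moreover have "card (l \<inter> B) \<le> card {P}"
        using l assms(2) by (intro card_mono) blast+
      ultimately show False
        by simp
    qed
  qed
qed

end

theorem mainTheorem2:
  fixes q :: nat and B :: "('a::{finite, field}) vec3 set set"
  assumes "prime_power q"
    and "card (UNIV :: 'a set) = q ^ 2"
    and "two_blocking_set q B"
  shows "\<forall>k::nat. card B \<le> k \<and> k \<le> q ^ 3 + 1 \<longrightarrow>
           (\<exists>S :: 'a vec3 set set. semioval S \<and> card S = k)"
proof (intro allI impI)
  fix k :: nat
  assume k: "card B \<le> k \<and> k \<le> q ^ 3 + 1"
  interpret frobenius_field q "TYPE('a)"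
    using assms(1,2) by (rule frobenius_field_if_prime_power)
  have B: "B \<subseteq> hermitian q"
    using assms(3) by (simp add: two_blocking_set_def)
  moreover have "k \<le> card (hermitian q :: 'a vec3 set set)"
    using k card_hermitian_ge by linarith
  ultimately have "k - card B \<le> card (hermitian q - B)"
    by (simp add: card_Diff_subset diff_le_mono)
  then obtain T where T: "T \<subseteq> hermitian q - B" "card T = k - card B"
    by (meson obtain_subset_with_card_n)
  have "semioval (B \<union> T)"
    using semioval_if_contains_2_blocking_set[OF assms(3)] B T(1) by blast
  moreover have "card (B \<union> T) = k"
    using T k by (subst card_Un_disjoint) auto
  ultimately show "\<exists>S :: 'a vec3 set set. semioval S \<and> card S = k"
    by blast
qed

end
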